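(* For $x\in\mathbb{R}$ let \[ H(x)=\begin{bmatrix}1 & -ix & ix & x\\ ix & 1 & -ix & x\\ -ix & ix & 1 & x\\ x & x & x & 1\end{bmatrix}. \] For $x=1/\sqrt{3}$, the matrix $H(x)$ has rank $2$ and spans an extremal ray of the cone $\mathcal{M}_4^+[e]$.
   Context: $\mathcal{M}_4^+[e]$ is the cone of $4\times4$ complex positive semidefinite matrices whose diagonal entries are all equal (complex correlation matrices up to scaling). An extremal ray of a cone $\mathcal{C}$ is $\mathbb{R}_+v$, $v\ne0$, such that $v=a+b$ with $a,b\in\mathcal{C}$ implies $a,b\in\mathbb{R}_+v$. *)

theory Defs
  imports "HOL-Analysis.Analysis"
begin

text \<open>Complex 4x4 matrices are modelled as complex^4^4 (HOL-Analysis).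
  The literal vector [a,b,c,d] puts a,b,c,d at indices 1,2,3,4 (= 0) of type 4.\<close>

definition hermitian_mat :: "complex^'n^'n \<Rightarrow> bool" where
  "hermitian_mat A \<longleftrightarrow> (\<forall>i j. A$i$j = cnj (A$j$i))"

definition psd_mat :: "complex^'n^'n \<Rightarrow> bool" where
  "psd_mat A \<longleftrightarrow> hermitian_mat A \<and>
     (\<forall>v::complex^'n. 0 \<le> Re (\<Sum>i\<in>UNIV. \<Sum>j\<in>UNIV. cnj (v$i) * A$i$j * v$j))"

definition corr_cone :: "(complex^'n^'n) set" where
  "corr_cone = {A. psd_mat A \<and> (\<forall>i j. A$i$i = A$j$j)}"

definition extremal_ray :: "'a::real_vector set \<Rightarrow> 'a \<Rightarrow> bool" where
  "extremal_ray C v \<longleftrightarrow> v \<noteq> 0 \<and> v \<in> C \<and>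
     (\<forall>a\<in>C. \<forall>b\<in>C. v = a + b \<longrightarrow>
        (\<exists>s\<ge>0. a = s *\<^sub>R v) \<and> (\<exists>t\<ge>0. b = t *\<^sub>R v))"

definition Hmat :: "real \<Rightarrow> complex^4^4" where
  "Hmat x = (let y = complex_of_real x in
     vector [vector [1, -\<i>*y, \<i>*y, y],
             vector [\<i>*y, 1, -\<i>*y, y],
             vector [-\<i>*y, \<i>*y, 1, y],
             vector [y, y, y, 1]])"

end

theory Submission
  imports Defs
begin

text \<open>If \<open>H = A + B\<close> with \<open>A, B\<close> in the cone, then \<open>A\<close> and \<open>B\<close> are positive semidefinite,
  so the kernel of \<open>H\<close> lies in the kernel of \<open>A\<close> (a nonnegative quadratic form vanishing at a
  point has vanishing polarisation there). For \<open>x\<^sup>2 = 1/3\<close> the kernel of \<open>H(x)\<close> is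
  two-dimensional, and the resulting linear conditions on \<open>A\<close>, together with equal diagonal
  entries, force \<open>A = A\<^sub>1\<^sub>1 H(x)\<close>.\<close>

definition sesq_form :: "complex^'n^'n \<Rightarrow> complex^'n \<Rightarrow> complex^'n \<Rightarrow> complex" where
  "sesq_form A v w = (\<Sum>i\<in>UNIV. \<Sum>j\<in>UNIV. cnj (v$i) * A$i$j * w$j)"

lemma psd_mat_iff: "psd_mat A \<longleftrightarrow> hermitian_mat A \<and> (\<forall>v. 0 \<le> Re (sesq_form A v v))"
  by (simp add: psd_mat_def sesq_form_def)

lemma hermitian_mat_cnj: "hermitian_mat A \<Longrightarrow> cnj (A$i$j) = A$j$i"
  unfolding hermitian_mat_def by (metis complex_cnj_cnj)

lemma hermitian_mat_diag_real: "hermitian_mat A \<Longrightarrow> A$i$i = complex_of_real (Re (A$i$i))"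
  using hermitian_mat_cnj[of A i i] by (simp add: complex_eq_iff)

lemma sesq_form_add_mat: "sesq_form (A + B) v w = sesq_form A v w + sesq_form B v w"
  by (simp add: sesq_form_def algebra_simps sum.distrib)

lemma sesq_form_mult_vec: "sesq_form A v w = (\<Sum>i\<in>UNIV. cnj (v$i) * (A *v w)$i)"
  by (simp add: sesq_form_def matrix_vector_mult_def sum_distrib_left mult.assoc)

lemma sesq_form_axis_left: "sesq_form A (axis j c) w = cnj c * (A *v w)$j"
proof -
  have summand: "(\<lambda>i. cnj (axis j c $ i) * (A *v w)$i) = (\<lambda>i. if i = j then cnj c * (A *v w)$i else 0)"
    by (auto simp: axis_def)
  show ?thesis unfolding sesq_form_mult_vec summand by simp
qed

lemma sesq_form_cnj_swap:
  assumes "hermitian_mat A"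
  shows "sesq_form A w v = cnj (sesq_form A v w)"
proof -
  have "cnj (sesq_form A v w) = (\<Sum>i\<in>UNIV. \<Sum>j\<in>UNIV. v$i * A$j$i * cnj (w$j))"
    using hermitian_mat_cnj[OF assms] by (simp add: sesq_form_def)
  also have "\<dots> = (\<Sum>j\<in>UNIV. \<Sum>i\<in>UNIV. v$i * A$j$i * cnj (w$j))"
    by (rule sum.swap)
  also have "\<dots> = sesq_form A w v"
    by (simp add: sesq_form_def algebra_simps)
  finally show ?thesis by simp
qed

lemma sesq_form_add_scaled:
  "sesq_form A (v + c *s w) (v + c *s w) =
     sesq_form A v v + c * sesq_form A v w + cnj c * sesq_form A w v + cnj c * c * sesq_form A w w"
proof -
  have "cnj ((v + c *s w)$i) * A$i$j * (v + c *s w)$j =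
      cnj (v$i) * A$i$j * v$j + c * (cnj (v$i) * A$i$j * w$j)
      + cnj c * (cnj (w$i) * A$i$j * v$j) + cnj c * c * (cnj (w$i) * A$i$j * w$j)" for i j
    by (simp add: algebra_simps)
  then show ?thesis
    by (simp add: sesq_form_def sum.distrib sum_distrib_left)
qed

lemma Re_sesq_form_add_scaled:
  fixes t :: real
  assumes "hermitian_mat A"
  shows "Re (sesq_form A (v + of_real t *s w) (v + of_real t *s w)) =
    Re (sesq_form A v v) + 2 * t * Re (sesq_form A w v) + t * t * Re (sesq_form A w w)"
  unfolding sesq_form_add_scaled sesq_form_cnj_swap[OF assms, of v w] by simp

lemma linear_coeff_eq_0_if_nonneg:
  fixes a c :: real
  assumes "\<And>t. 0 \<le> 2 * t * c + t * t * a"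
  shows "c = 0"
proof (rule ccontr)
  assume "c \<noteq> 0"
  define D where "D = \<bar>a\<bar> + 1"
  define t where "t = - c / D"
  have "D > 0" by (simp add: D_def)
  have "D * D * (2 * t * c + t * t * a) = c * c * (a - 2 * D)"
    using \<open>D > 0\<close> unfolding t_def by (simp add: field_simps power2_eq_square)
  also have "\<dots> < 0"
  proof (rule mult_pos_neg)
    show "0 < c * c" using \<open>c \<noteq> 0\<close> by (metis not_real_square_gt_zero)
    show "a - 2 * D < 0" by (simp add: D_def)
  qed
  finally have "2 * t * c + t * t * a < 0"
    using \<open>D > 0\<close> by (simp add: mult_less_0_iff)
  with assms[of t] show False by linarith
qed

lemma psd_mat_mult_vec_eq_0:
  assumes A: "psd_mat A" and v: "Re (sesq_form A v v) = 0"
  shows "A *v v = 0"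
proof -
  have herm: "hermitian_mat A" using A by (simp add: psd_mat_iff)
  have Re0: "Re (sesq_form A w v) = 0" for w
  proof (rule linear_coeff_eq_0_if_nonneg)
    fix t :: real
    have "0 \<le> Re (sesq_form A (v + of_real t *s w) (v + of_real t *s w))"
      using A by (simp add: psd_mat_iff)
    then show "0 \<le> 2 * t * Re (sesq_form A w v) + t * t * Re (sesq_form A w w)"
      using v Re_sesq_form_add_scaled[OF herm, of v t w] by simp
  qed
  show ?thesis
  proof (rule iffD2[OF vec_eq_iff], intro allI)
    fix j
    from Re0[of "axis j 1"] Re0[of "axis j \<i>"] show "(A *v v)$j = 0$j"
      by (simp add: sesq_form_axis_left complex_eq_iff)
  qed
qed

lemma psd_mat_add_kernel:
  assumes A: "psd_mat A" and B: "psd_mat B" and v: "(A + B) *v v = 0"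
  shows "A *v v = 0"
proof (rule psd_mat_mult_vec_eq_0[OF A])
  have "sesq_form (A + B) v v = 0"
    using v by (simp add: sesq_form_mult_vec)
  then have "Re (sesq_form A v v) + Re (sesq_form B v v) = 0"
    by (metis sesq_form_add_mat plus_complex.sel(1) zero_complex.sel(1))
  moreover have "0 \<le> Re (sesq_form A v v)" "0 \<le> Re (sesq_form B v v)"
    using A B by (simp_all add: psd_mat_iff)
  ultimately show "Re (sesq_form A v v) = 0"
    by linarith
qed

lemma hermitian_mat_left_kernel:
  assumes "hermitian_mat A" and "A *v v = 0"
  shows "(\<chi> i. cnj (v$i)) v* A = 0"
proof -
  have "((\<chi> i. cnj (v$i)) v* A)$j = cnj ((A *v v)$j)" for j
    using hermitian_mat_cnj[OF assms(1)]
    by (simp add: vector_matrix_mult_def matrix_vector_mult_def mult.commute)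
  then show ?thesis using assms(2) by (simp add: vec_eq_iff)
qed

lemma sesq_form_axis_axis: "sesq_form A (axis i 1) (axis i 1) = A$i$i"
  unfolding sesq_form_axis_left by (simp add: matrix_vector_mult_def axis_def if_distrib cong: if_cong)

lemma psd_mat_diag_nonneg: "psd_mat A \<Longrightarrow> 0 \<le> Re (A$i$i)"
  by (metis psd_mat_iff sesq_form_axis_axis)

lemma independent_pair_if_minor_nonzero:
  fixes u v :: "'a::field^'n"
  assumes "u$i * v$j \<noteq> u$j * v$i"
  shows "vec.independent {u, v}"
proof -
  have "u \<noteq> v" "v \<noteq> 0" using assms by (auto simp: mult.commute)
  moreover have "u \<notin> vec.span {v}"
  proof
    assume "u \<in> vec.span {v}"
    then obtain c where "u = c *s v" by (auto simp: vec.span_singleton)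
    then show False using assms by simp
  qed
  ultimately show ?thesis by (simp add: vec.independent_insert)
qed

lemma rank_eq_card_spanning_rows:
  fixes A :: "'a::field^'n^'m"
  assumes "B \<subseteq> rows A" "rows A \<subseteq> vec.span B" "vec.independent B"
  shows "rank A = card B"
  unfolding row_rank_def_gen using assms by (intro vec.dim_unique) auto

lemma vector_4_nth [simp]:
  "(vector [a, b, c, d] :: 'a::zero^4)$1 = a"
  "(vector [a, b, c, d] :: 'a::zero^4)$2 = b"
  "(vector [a, b, c, d] :: 'a::zero^4)$3 = c"
  "(vector [a, b, c, d] :: 'a::zero^4)$4 = d"
  unfolding vector_def by simp_all

lemma Hmat_nth [simp]:
  fixes x :: real
  defines "y \<equiv> complex_of_real x"
  shows "Hmat x $1$1 = 1" "Hmat x $1$2 = -\<i>*y" "Hmat x $1$3 = \<i>*y" "Hmat x $1$4 = y"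
    "Hmat x $2$1 = \<i>*y" "Hmat x $2$2 = 1" "Hmat x $2$3 = -\<i>*y" "Hmat x $2$4 = y"
    "Hmat x $3$1 = -\<i>*y" "Hmat x $3$2 = \<i>*y" "Hmat x $3$3 = 1" "Hmat x $3$4 = y"
    "Hmat x $4$1 = y" "Hmat x $4$2 = y" "Hmat x $4$3 = y" "Hmat x $4$4 = 1"
  by (simp_all add: Hmat_def y_def Let_def)

lemma hermitian_Hmat: "hermitian_mat (Hmat x)"
  unfolding hermitian_mat_def forall_4 by simp

lemma Hmat_diag_eq: "Hmat x $i$i = Hmat x $j$j"
  using exhaust_4[of i] exhaust_4[of j] by auto

lemma of_real_square_third:
  assumes "x\<^sup>2 = 1/3"
  shows "complex_of_real x * complex_of_real x = 1/3"
  by (metis assms of_real_divide of_real_mult of_real_numeral of_real_1 power2_eq_square)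

lemma psd_Hmat:
  assumes "x\<^sup>2 = 1/3"
  shows "psd_mat (Hmat x)"
proof -
  define y where "y = complex_of_real x"
  have y2: "y * y = 1/3" using of_real_square_third[OF assms] by (simp add: y_def)
  have "0 \<le> Re (sesq_form (Hmat x) v v)" for v
  proof -
    define \<alpha> where "\<alpha> = y * (v$1 + v$2 + v$3) + v$4"
    define \<beta> where "\<beta> = 2/3 * v$1 + (-\<i>*y - 1/3) * v$2 + (\<i>*y - 1/3) * v$3"
    have cnj_\<alpha>: "cnj \<alpha> = y * (cnj (v$1) + cnj (v$2) + cnj (v$3)) + cnj (v$4)"
      by (simp add: \<alpha>_def y_def)
    have cnj_\<beta>: "cnj \<beta> = 2/3 * cnj (v$1) + (\<i>*y - 1/3) * cnj (v$2) + (-\<i>*y - 1/3) * cnj (v$3)"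
      by (simp add: \<beta>_def y_def)
    \<comment> \<open>completing squares, first in \<open>v$4\<close>, then in \<open>v$1\<close>\<close>
    have "sesq_form (Hmat x) v v = \<alpha> * cnj \<alpha> + 3/2 * (\<beta> * cnj \<beta>)"
      unfolding cnj_\<alpha> cnj_\<beta>
      unfolding sesq_form_def sum_4 Hmat_nth \<alpha>_def \<beta>_def y_def[symmetric]
      using y2 i_squared by algebra
    also have "\<dots> = of_real ((cmod \<alpha>)\<^sup>2 + 3/2 * (cmod \<beta>)\<^sup>2)"
      by (simp flip: complex_norm_square)
    finally show ?thesis by simp
  qed
  then show ?thesis by (simp add: psd_mat_iff hermitian_Hmat)
qed

definition Hmat_null1 :: "real \<Rightarrow> complex^4" where
  "Hmat_null1 x = (let y = complex_of_real x in vector [-2*\<i>*y, \<i>*y - 1, 1 + \<i>*y, 0])"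

definition Hmat_null2 :: "real \<Rightarrow> complex^4" where
  "Hmat_null2 x = vector [1, 1, 1, -3 * complex_of_real x]"

lemma Hmat_mult_null:
  assumes "x\<^sup>2 = 1/3"
  shows "Hmat x *v Hmat_null1 x = 0" "Hmat x *v Hmat_null2 x = 0"
proof -
  define y where "y = complex_of_real x"
  have y2: "y * y = 1/3" "y * (y * z) = z / 3" for z
    using of_real_square_third[OF assms] by (simp_all add: y_def mult.assoc[symmetric])
  show "Hmat x *v Hmat_null1 x = 0" "Hmat x *v Hmat_null2 x = 0"
    unfolding vec_eq_iff forall_4 matrix_vector_mult_def sum_4 Hmat_null1_def Hmat_null2_def
      Let_def vec_lambda_beta zero_index vector_4_nth Hmat_nth y_def[symmetric]
    by (simp_all add: algebra_simps y2)
qed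

lemma rank_Hmat:
  assumes "x\<^sup>2 = 1/3"
  shows "rank (Hmat x) = 2"
proof -
  define y where "y = complex_of_real x"
  have y2: "y * y = 1/3" "y * (y * z) = z / 3" for z
    using of_real_square_third[OF assms] by (simp_all add: y_def mult.assoc[symmetric])
  let ?r1 = "row 1 (Hmat x)" and ?r4 = "row 4 (Hmat x)"
  have row2: "row 2 (Hmat x) = (-1/2 + 3/2*\<i>*y) *s ?r1 + (3/2*y - \<i>/2) *s ?r4"
    and row3: "row 3 (Hmat x) = (-1/2 - 3/2*\<i>*y) *s ?r1 + (3/2*y + \<i>/2) *s ?r4"
    unfolding vec_eq_iff forall_4 row_def vec_lambda_beta vector_scalar_mult_def
      vector_add_component Hmat_nth y_def[symmetric]
    by (simp_all add: algebra_simps y2)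
  have minor: "?r1$1 * ?r4$4 \<noteq> ?r1$4 * ?r4$1"
    by (simp add: row_def y_def[symmetric] y2(1))
  then have indep: "vec.independent {?r1, ?r4}"
    by (rule independent_pair_if_minor_nonzero)
  have "?r1 \<noteq> ?r4"
    using minor by (metis mult.commute)
  have "?r1 \<in> vec.span {?r1, ?r4}" "?r4 \<in> vec.span {?r1, ?r4}"
    by (simp_all add: vec.span_base)
  then have "row i (Hmat x) \<in> vec.span {?r1, ?r4}" for i
    using exhaust_4[of i] by (elim disjE) (simp_all only: row2 row3 vec.span_add vec.span_scale)
  then have "rows (Hmat x) \<subseteq> vec.span {?r1, ?r4}"
    by (auto simp: rows_def)
  moreover have "{?r1, ?r4} \<subseteq> rows (Hmat x)" by (auto simp: rows_def)
  ultimately have "rank (Hmat x) = card {?r1, ?r4}"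
    using indep by (intro rank_eq_card_spanning_rows)
  also have "\<dots> = 2"
    using \<open>?r1 \<noteq> ?r4\<close> by simp
  finally show ?thesis .
qed

text \<open>Hermitian symmetry enters only through the left-kernel hypotheses, so no conjugates of
  entries of \<open>a\<close> occur and the hypotheses form a \<open>\<complex>\<close>-linear system in its sixteen entries.\<close>

lemma Hmat_rigidity:
  fixes a :: "complex^4^4"
  assumes x: "x\<^sup>2 = 1/3" and diag: "\<forall>i j. a$i$i = a$j$j"
    and "a *v Hmat_null1 x = 0" "a *v Hmat_null2 x = 0"
    and "(\<chi> i. cnj (Hmat_null1 x $ i)) v* a = 0" "(\<chi> i. cnj (Hmat_null2 x $ i)) v* a = 0"
  shows "a$i$j = a$1$1 * Hmat x $i$j"
proof -
  define y where "y = complex_of_real x"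
  have y2: "y * y = 1/3" using of_real_square_third[OF x] by (simp add: y_def)
  have cnj_null: "(\<chi> i. cnj (Hmat_null1 x $ i)) = vector [2*\<i>*y, -\<i>*y - 1, 1 - \<i>*y, 0]"
      "(\<chi> i. cnj (Hmat_null2 x $ i)) = Hmat_null2 x"
    by (simp_all add: vec_eq_iff forall_4 Hmat_null1_def Hmat_null2_def Let_def y_def)
  have diag_eq: "a$2$2 = a$1$1" "a$3$3 = a$1$1" "a$4$4 = a$1$1" using diag by metis+
  have "\<forall>i j. a$i$j = a$1$1 * Hmat x $i$j"
    using assms(3-6) y2 i_squared
    unfolding cnj_null
    unfolding Hmat_null1_def Hmat_null2_def Let_def forall_4 Hmat_nth y_def[symmetric] vec_eq_iff
      matrix_vector_mult_def vector_matrix_mult_def sum_4 vec_lambda_beta zero_index vector_4_nth diag_eq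
    by algebra
  then show ?thesis by blast
qed

lemma extremal_ray_Hmat:
  assumes x: "x\<^sup>2 = 1/3"
  shows "extremal_ray corr_cone (Hmat x)"
  unfolding extremal_ray_def
proof (intro conjI ballI impI)
  show "Hmat x \<noteq> 0"
    by (metis Hmat_nth(1) zero_index zero_neq_one)
  show "Hmat x \<in> corr_cone"
    using psd_Hmat[OF x] Hmat_diag_eq by (simp add: corr_cone_def)
  fix a b assume "a \<in> corr_cone" "b \<in> corr_cone" and decomp: "Hmat x = a + b"
  then have psd: "psd_mat a" "psd_mat b" and diag: "\<forall>i j. a$i$i = a$j$j"
    by (simp_all add: corr_cone_def)
  have herm: "hermitian_mat a" using psd by (simp add: psd_mat_iff)
  have null: "a *v Hmat_null1 x = 0" "a *v Hmat_null2 x = 0"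
    using Hmat_mult_null[OF x] unfolding decomp by (auto intro: psd_mat_add_kernel[OF psd])
  define s where "s = Re (a$1$1)"
  have a11: "a$1$1 = of_real s"
    unfolding s_def by (rule hermitian_mat_diag_real[OF herm])
  have "a$i$j = (s *\<^sub>R Hmat x)$i$j" for i j
    using Hmat_rigidity[OF x diag null hermitian_mat_left_kernel[OF herm null(1)]
        hermitian_mat_left_kernel[OF herm null(2)], of i j]
    unfolding a11 vector_scaleR_component by (simp add: scaleR_conv_of_real)
  then have a_eq: "a = s *\<^sub>R Hmat x"
    by (simp add: vec_eq_iff)
  then have b_eq: "b = (1 - s) *\<^sub>R Hmat x"
    using decomp by (simp add: algebra_simps)
  have "0 \<le> s" "0 \<le> 1 - s"
    using psd_mat_diag_nonneg[OF psd(1), of 1] psd_mat_diag_nonneg[OF psd(2), of 1] a_eq b_eq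
    by simp_all
  then show "\<exists>s\<ge>0. a = s *\<^sub>R Hmat x" "\<exists>t\<ge>0. b = t *\<^sub>R Hmat x"
    using a_eq b_eq by blast+
qed

theorem mainTheorem10:
  shows "rank (Hmat (1 / sqrt 3)) = 2 \<and> extremal_ray (corr_cone :: (complex^4^4) set) (Hmat (1 / sqrt 3))"
proof -
  have "(1 / sqrt 3)\<^sup>2 = (1/3 :: real)"
    by (simp add: power_divide)
  then show ?thesis
    using rank_Hmat extremal_ray_Hmat by simp
qed

end
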